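(* Let $f_1,f_2:(0,1)\to(0,1)$ each be of the form $f_m(p)=1-\sum_{k=1}^\infty c_{m,k}(1-p)^k$ with $c_{m,k}\ge0$ and $\sum_k c_{m,k}=1$ ($m=1,2$). Define $f(p)=f_2(f_1(p))$, $g(p)=1-(1-f_1(p))(1-f_2(p))$, and $h(p)=\alpha f_1(p)+(1-\alpha)f_2(p)$ for a fixed $\alpha\in(0,1)$. Then: (a) each of $f,g,h$ can also be written as $1-\sum_{k=1}^\infty c_k(1-p)^k$ with $c_k\ge0$ and $\sum_k c_k=1$; (b) if $\lim_{p\to0}f_m(p)/p=\infty$ for $m=1,2$, then $\lim_{p\to0}F(p)/p=\infty$ for each $F\in\{f,g,h\}$; (c) if $f_m'(p)=\Omega(f_m(p)/p)$ as $p\to0$ for $m=1,2$, then $F'(p)=\Omega(F(p)/p)$ as $p\to0$ for each $F\in\{f,g,h\}$.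
   Context: For positive $f_1,f_2$, $f_1(x)=\Omega(f_2(x))$ as $x\to x_0$ means there are $C,\delta>0$ with $f_1(x)\ge Cf_2(x)$ for all $x$ in the domain with $|x-x_0|<\delta$. *)

theory Defs
  imports "HOL-Analysis.Analysis"
begin

text \<open>F has the form F(p) = 1 - sum_{k>=1} c_k (1-p)^k on (0,1), with c_k >= 0 and sum_k c_k = 1.
  The coefficient sequence is indexed from 0 with c 0 = 0.\<close>
definition series_form :: "(real \<Rightarrow> real) \<Rightarrow> (nat \<Rightarrow> real) \<Rightarrow> bool" where
  "series_form F c \<longleftrightarrow> (\<forall>k. 0 \<le> c k) \<and> c 0 = 0 \<and> c sums 1 \<and>
     (\<forall>p\<in>{0<..<1}. F p = 1 - (\<Sum>k. c k * (1 - p) ^ k))"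

definition bigOmega_at0 :: "(real \<Rightarrow> real) \<Rightarrow> (real \<Rightarrow> real) \<Rightarrow> bool" where
  "bigOmega_at0 F1 F2 \<longleftrightarrow> (\<exists>C>0. \<exists>\<delta>>0. \<forall>p. 0 < p \<and> p < 1 \<and> p < \<delta> \<longrightarrow> F1 p \<ge> C * F2 p)"

end

theory Submission
  imports Defs
begin

text \<open>The coefficients \<open>c\<^sub>k\<close> in \<open>F p = 1 - (\<Sum>k. c\<^sub>k (1 - p)\<^sup>k)\<close> form a probability distribution on the
  positive integers, and \<open>F p = 1 - G (1 - p)\<close> where \<open>G\<close> is its probability generating function.
  Composition, the product \<open>1 - (1 - f\<^sub>1)(1 - f\<^sub>2)\<close> and mixtures correspond to
  \<open>G\<^sub>2 \<circ> G\<^sub>1\<close>, \<open>G\<^sub>1 G\<^sub>2\<close> and convex combinations of generating functions, which are again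
  generating functions of distributions; their coefficients come from convolution (powers) by
  rearranging nonnegative double series. The growth statements are elementary: since
  \<open>f\<^sub>m(p) \<rightarrow> 0\<close>, the chain rule gives \<open>(f\<^sub>2 \<circ> f\<^sub>1)' = f\<^sub>2'(f\<^sub>1) f\<^sub>1'\<close> with both factors
  bounded below by the corresponding \<open>f/p\<close>, and the product rule for \<open>1 - (1 - f\<^sub>1)(1 - f\<^sub>2)\<close>
  only loses the factors \<open>1 - f\<^sub>m \<ge> 1/2\<close>.\<close>

definition pgf :: "(nat \<Rightarrow> real) \<Rightarrow> real \<Rightarrow> real" where
  "pgf c q = (\<Sum>k. c k * q ^ k)"

lemma series_form_pgf:
  "series_form F c \<longleftrightarrow> (\<forall>k. 0 \<le> c k) \<and> c 0 = 0 \<and> c sums 1 \<and>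
     (\<forall>p\<in>{0<..<1}. F p = 1 - pgf c (1 - p))"
  by (simp add: series_form_def pgf_def)

lemma pgf_sums:
  assumes "\<And>k. 0 \<le> c k" "summable c" "0 \<le> q" "q \<le> 1"
  shows "(\<lambda>k. c k * q ^ k) sums pgf c q"
proof -
  have "summable (\<lambda>k. c k * q ^ k)"
    by (rule summable_comparison_test'[OF assms(2)])
       (use assms in \<open>simp add: abs_mult mult_left_le power_le_one\<close>)
  then show ?thesis
    by (simp add: pgf_def summable_sums)
qed

lemma pgf_nonneg:
  assumes "\<And>k. 0 \<le> c k" "summable c" "0 \<le> q" "q \<le> 1"
  shows "0 \<le> pgf c q"
  using sums_le[OF _ sums_zero pgf_sums[OF assms]] assms by simp

lemma pgf_le_suminf:
  assumes "\<And>k. 0 \<le> c k" "summable c" "0 \<le> q" "q \<le> 1"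
  shows "pgf c q \<le> suminf c"
  by (rule sums_le[OF _ pgf_sums[OF assms] summable_sums[OF assms(2)]])
     (use assms in \<open>simp add: mult_left_le power_le_one\<close>)

lemma continuous_on_pgf:
  assumes "\<And>k. 0 \<le> c k" "summable c"
  shows "continuous_on {0..1} (pgf c)"
proof -
  have limit: "uniform_limit {0..1} (\<lambda>n q. \<Sum>k<n. c k * q ^ k) (pgf c) sequentially"
    unfolding pgf_def[abs_def]
    by (rule Weierstrass_m_test[OF _ assms(2)])
       (use assms in \<open>auto simp: abs_mult mult_left_le power_le_one\<close>)
  show ?thesis
    by (rule uniform_limit_theorem[OF _ limit]) (auto intro!: always_eventually continuous_intros)
qed

lemma pgf_has_field_derivative:
  assumes "summable c" "\<bar>q\<bar> < 1"
  obtains D where "(pgf c has_field_derivative D) (at q)"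
proof -
  have "ereal (norm (1::real)) \<le> conv_radius c"
    by (rule conv_radius_geI) (use assms(1) in simp)
  moreover have "ereal (norm q) < ereal (norm (1::real))"
    using assms(2) by simp
  ultimately have "ereal (norm q) < conv_radius c"
    by order
  from has_field_derivative_powser[OF this] that show ?thesis
    unfolding pgf_def[abs_def] by blast
qed

lemma series_form_intro:
  assumes "\<And>k. 0 \<le> e k" "e 0 = 0"
    and "\<And>q. 0 \<le> q \<Longrightarrow> q \<le> 1 \<Longrightarrow> (\<lambda>k. e k * q ^ k) sums S q" "S 1 = 1"
    and "\<And>p. p \<in> {0<..<1} \<Longrightarrow> F p = 1 - S (1 - p)"
  shows "series_form F e"
  unfolding series_form_def
proof (intro conjI allI ballI)
  show "e sums 1"
    using assms(3)[of 1] assms(4) by simp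
  fix p :: real
  assume p: "p \<in> {0<..<1}"
  then have "(\<lambda>k. e k * (1 - p) ^ k) sums S (1 - p)"
    by (intro assms(3)) auto
  then show "F p = 1 - (\<Sum>k. e k * (1 - p) ^ k)"
    using assms(5)[OF p] by (simp add: sums_iff)
qed (use assms in auto)

lemma series_form_tendsto_0:
  assumes "series_form F c"
  shows "(F \<longlongrightarrow> 0) (at_right 0)"
proof -
  have c: "\<And>k. 0 \<le> c k" "c sums 1" "\<forall>p\<in>{0<..<1}. F p = 1 - pgf c (1 - p)"
    using assms by (auto simp: series_form_pgf)
  have "continuous_on {0..1} (\<lambda>p. 1 - pgf c (1 - p))"
    by (intro continuous_intros continuous_on_compose2[OF continuous_on_pgf])
       (use c in \<open>auto simp: sums_iff\<close>)
  then have "((\<lambda>p. 1 - pgf c (1 - p)) \<longlongrightarrow> 1 - pgf c 1) (at_right 0)"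
    by (auto simp: continuous_on_def at_within_Icc_at_right dest: bspec[of _ _ 0])
  moreover have "pgf c 1 = 1"
    using c(2) by (simp add: pgf_def sums_iff)
  moreover have "eventually (\<lambda>p. 1 - pgf c (1 - p) = F p) (at_right 0)"
    unfolding eventually_at_right_field using c(3) by (intro exI[of _ 1]) auto
  ultimately show ?thesis
    by (auto dest: tendsto_cong[THEN iffD1, rotated])
qed

lemma series_form_differentiable:
  assumes "series_form F c" "p \<in> {0<..<1}"
  shows "F differentiable (at p)"
proof -
  have c: "summable c" "\<forall>p\<in>{0<..<1}. F p = 1 - pgf c (1 - p)"
    using assms(1) by (auto simp: series_form_pgf sums_iff)
  from assms(2) have "\<bar>1 - p\<bar> < 1"
    by auto
  then obtain D where "(pgf c has_field_derivative D) (at (1 - p))"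
    by (rule pgf_has_field_derivative[OF c(1)])
  then have "((\<lambda>x. 1 - pgf c (1 - x)) has_field_derivative D) (at p)"
    by (auto intro!: derivative_eq_intros DERIV_chain2[where g = "\<lambda>x. 1 - x"])
  then have "(F has_field_derivative D) (at p)"
    by (rule has_field_derivative_transform_within_open[of _ _ _ "{0<..<1}"])
       (use assms(2) c(2) in auto)
  then show ?thesis
    unfolding differentiable_def has_field_derivative_def by blast
qed

definition conv :: "(nat \<Rightarrow> real) \<Rightarrow> (nat \<Rightarrow> real) \<Rightarrow> nat \<Rightarrow> real" where
  "conv a b k = (\<Sum>i\<le>k. a i * b (k - i))"

fun conv_power :: "(nat \<Rightarrow> real) \<Rightarrow> nat \<Rightarrow> nat \<Rightarrow> real" where
  "conv_power a 0 = (\<lambda>k. if k = 0 then 1 else 0)"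
| "conv_power a (Suc j) = conv a (conv_power a j)"

lemma conv_nonneg: "(\<And>k. 0 \<le> a k) \<Longrightarrow> (\<And>k. 0 \<le> b k) \<Longrightarrow> 0 \<le> conv a b k"
  by (simp add: conv_def sum_nonneg)

lemma conv_power_nonneg: "(\<And>k. 0 \<le> a k) \<Longrightarrow> 0 \<le> conv_power a j k"
  by (induction j arbitrary: k) (auto intro!: conv_nonneg)

lemma conv_at_0 [simp]: "conv a b 0 = a 0 * b 0"
  by (simp add: conv_def)

lemma conv_sums_mult:
  assumes "\<And>k. 0 \<le> a k" "\<And>k. 0 \<le> b k" "0 \<le> q"
    and "(\<lambda>k. a k * q ^ k) sums A" "(\<lambda>k. b k * q ^ k) sums B"
  shows "(\<lambda>k. conv a b k * q ^ k) sums (A * B)"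
proof -
  have "summable (\<lambda>k. norm (a k * q ^ k))" "summable (\<lambda>k. norm (b k * q ^ k))"
    using assms by (simp_all add: sums_iff abs_mult)
  from Cauchy_product_sums[OF this]
  have "(\<lambda>k. \<Sum>i\<le>k. a i * q ^ i * (b (k - i) * q ^ (k - i))) sums (A * B)"
    using assms(4,5) by (simp add: sums_iff)
  moreover have "a i * q ^ i * (b (k - i) * q ^ (k - i)) = a i * b (k - i) * q ^ k" if "i \<le> k" for i k
    using that by (simp add: mult_ac flip: power_add)
  ultimately show ?thesis
    by (simp add: conv_def sum_distrib_right)
qed

lemma conv_power_sums:
  assumes "\<And>k. 0 \<le> a k" "0 \<le> q" "(\<lambda>k. a k * q ^ k) sums A"
  shows "(\<lambda>k. conv_power a j k * q ^ k) sums (A ^ j)"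
proof (induction j)
  case 0
  have "(\<lambda>k. conv_power a 0 k * q ^ k) = (\<lambda>k. if k = 0 then 1 else 0)"
    by auto
  then show ?case
    using sums_single[of 0 "\<lambda>_. 1::real"] by simp
next
  case (Suc j)
  then show ?case
    using conv_sums_mult[OF assms(1) conv_power_nonneg[OF assms(1)] assms(2,3)] by simp
qed

definition comp_coeffs :: "(nat \<Rightarrow> real) \<Rightarrow> (nat \<Rightarrow> real) \<Rightarrow> nat \<Rightarrow> real" where
  "comp_coeffs c1 c2 k = (\<Sum>\<^sub>\<infinity>j. c2 j * conv_power c1 j k)"

context
  fixes c1 c2 :: "nat \<Rightarrow> real"
  assumes c1: "\<And>k. 0 \<le> c1 k" "c1 sums 1"
    and c2: "\<And>k. 0 \<le> c2 k" "summable c2"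
begin

lemma pgf_pgf_has_sum:
  assumes "0 \<le> q" "q \<le> 1"
  shows "((\<lambda>(j, k). c2 j * conv_power c1 j k * q ^ k) has_sum pgf c2 (pgf c1 q)) (UNIV \<times> UNIV)"
proof -
  have c1_summable: "summable c1"
    using c1(2) by (simp add: sums_iff)
  have inner: "0 \<le> pgf c1 q" "pgf c1 q \<le> 1"
    using pgf_nonneg[OF c1(1) c1_summable assms] pgf_le_suminf[OF c1(1) c1_summable assms] c1(2)
    by (auto simp: sums_iff)
  have nonneg: "0 \<le> c2 j * conv_power c1 j k * q ^ k" for j k
    using c1(1) c2(1) assms(1) by (simp add: conv_power_nonneg)
  have row: "((\<lambda>k. c2 j * conv_power c1 j k * q ^ k) has_sum c2 j * pgf c1 q ^ j) UNIV" for j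
    using conv_power_sums[OF c1(1) assms(1) pgf_sums[OF c1(1) c1_summable assms], of j]
    by (intro sums_nonneg_imp_has_sum nonneg) (simp add: sums_mult mult.assoc)
  have col: "((\<lambda>j. c2 j * pgf c1 q ^ j) has_sum pgf c2 (pgf c1 q)) UNIV"
    by (rule sums_nonneg_imp_has_sum[OF pgf_sums[OF c2 inner]]) (simp add: c2(1) inner)
  have summable: "(\<lambda>(j, k). c2 j * conv_power c1 j k * q ^ k) summable_on UNIV \<times> UNIV"
    by (rule summable_on_SigmaI[OF _ has_sum_imp_summable[OF col]]) (use row nonneg in auto)
  show ?thesis
    by (rule has_sum_SigmaI[OF _ col summable]) (use row in auto)
qed

lemma comp_coeffs_sums:
  assumes "0 \<le> q" "q \<le> 1"
  shows "(\<lambda>k. comp_coeffs c1 c2 k * q ^ k) sums pgf c2 (pgf c1 q)"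
proof -
  have swap: "((\<lambda>(k, j). c2 j * conv_power c1 j k * x ^ k) has_sum pgf c2 (pgf c1 x)) (UNIV \<times> UNIV)"
    if "0 \<le> x" "x \<le> 1" for x
    using has_sum_swap[THEN iffD1, OF pgf_pgf_has_sum[OF that]] by (simp add: case_prod_unfold)
  \<comment> \<open>Summability of the coefficient series comes from \<open>x = 1\<close>, since \<open>q\<close> may be \<open>0\<close>.\<close>
  have "(\<lambda>j. c2 j * conv_power c1 j k) summable_on UNIV" for k
    using summable_on_SigmaD1[OF has_sum_imp_summable[OF swap[of 1]]] by simp
  then have "((\<lambda>j. c2 j * conv_power c1 j k * q ^ k) has_sum comp_coeffs c1 c2 k * q ^ k) UNIV" for k
    unfolding comp_coeffs_def by (intro has_sum_cmult_left has_sum_infsum)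
  then have "((\<lambda>k. comp_coeffs c1 c2 k * q ^ k) has_sum pgf c2 (pgf c1 q)) UNIV"
    by (intro has_sum_Sigma'[OF swap[OF assms]]) simp
  then show ?thesis
    by (rule has_sum_imp_sums)
qed

end

lemma series_form_comp:
  assumes f1: "series_form f1 c1" and f2: "series_form f2 c2"
    and range: "\<forall>p\<in>{0<..<1}. f1 p \<in> {0<..<1}"
  shows "series_form (\<lambda>p. f2 (f1 p)) (comp_coeffs c1 c2)"
proof -
  have c1: "\<And>k. 0 \<le> c1 k" "c1 0 = 0" "c1 sums 1" "\<forall>p\<in>{0<..<1}. f1 p = 1 - pgf c1 (1 - p)"
    and c2: "\<And>k. 0 \<le> c2 k" "c2 0 = 0" "c2 sums 1" "\<forall>p\<in>{0<..<1}. f2 p = 1 - pgf c2 (1 - p)"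
    using f1 f2 by (auto simp: series_form_pgf)
  have c2_summable: "summable c2"
    using c2(3) by (simp add: sums_iff)
  show ?thesis
  proof (rule series_form_intro[where S = "\<lambda>q. pgf c2 (pgf c1 q)"])
    show "0 \<le> comp_coeffs c1 c2 k" for k
      using c1(1) c2(1) by (simp add: comp_coeffs_def infsum_nonneg conv_power_nonneg)
    have "c2 j * conv_power c1 j 0 = 0" for j
      using c1(2) c2(2) by (cases j) simp_all
    then show "comp_coeffs c1 c2 0 = 0"
      unfolding comp_coeffs_def by (simp add: infsum_0)
    show "(\<lambda>k. comp_coeffs c1 c2 k * q ^ k) sums pgf c2 (pgf c1 q)" if "0 \<le> q" "q \<le> 1" for q
      by (rule comp_coeffs_sums[OF c1(1,3) c2(1) c2_summable that])
    show "pgf c2 (pgf c1 1) = 1"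
      using c1(3) c2(3) by (simp add: pgf_def sums_iff)
    show "f2 (f1 p) = 1 - pgf c2 (pgf c1 (1 - p))" if "p \<in> {0<..<1}" for p
      using that range c1(4) c2(4) by force
  qed
qed

lemma series_form_compl_mult:
  assumes f1: "series_form f1 c1" and f2: "series_form f2 c2"
  shows "series_form (\<lambda>p. 1 - (1 - f1 p) * (1 - f2 p)) (conv c1 c2)"
proof -
  have c1: "\<And>k. 0 \<le> c1 k" "c1 0 = 0" "c1 sums 1" "\<forall>p\<in>{0<..<1}. f1 p = 1 - pgf c1 (1 - p)"
    and c2: "\<And>k. 0 \<le> c2 k" "c2 sums 1" "\<forall>p\<in>{0<..<1}. f2 p = 1 - pgf c2 (1 - p)"
    using f1 f2 by (auto simp: series_form_pgf)
  show ?thesis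
  proof (rule series_form_intro[where S = "\<lambda>q. pgf c1 q * pgf c2 q"])
    show "(\<lambda>k. conv c1 c2 k * q ^ k) sums (pgf c1 q * pgf c2 q)" if "0 \<le> q" "q \<le> 1" for q
      using c1(1,3) c2(1,2) that by (intro conv_sums_mult pgf_sums) (auto simp: sums_iff)
    show "pgf c1 1 * pgf c2 1 = 1"
      using c1(3) c2(2) by (simp add: pgf_def sums_iff)
    show "0 \<le> conv c1 c2 k" for k
      using c1(1) c2(1) by (rule conv_nonneg)
  qed (use c1 c2 in auto)
qed

lemma series_form_convex_comb:
  assumes f1: "series_form f1 c1" and f2: "series_form f2 c2" and alpha: "0 \<le> \<alpha>" "\<alpha> \<le> 1"
  shows "series_form (\<lambda>p. \<alpha> * f1 p + (1 - \<alpha>) * f2 p) (\<lambda>k. \<alpha> * c1 k + (1 - \<alpha>) * c2 k)"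
proof -
  have c1: "\<And>k. 0 \<le> c1 k" "c1 0 = 0" "c1 sums 1" "\<forall>p\<in>{0<..<1}. f1 p = 1 - pgf c1 (1 - p)"
    and c2: "\<And>k. 0 \<le> c2 k" "c2 0 = 0" "c2 sums 1" "\<forall>p\<in>{0<..<1}. f2 p = 1 - pgf c2 (1 - p)"
    using f1 f2 by (auto simp: series_form_pgf)
  show ?thesis
  proof (rule series_form_intro[where S = "\<lambda>q. \<alpha> * pgf c1 q + (1 - \<alpha>) * pgf c2 q"])
    show "(\<lambda>k. (\<alpha> * c1 k + (1 - \<alpha>) * c2 k) * q ^ k) sums (\<alpha> * pgf c1 q + (1 - \<alpha>) * pgf c2 q)"
      if "0 \<le> q" "q \<le> 1" for q
    proof -
      have "(\<lambda>k. \<alpha> * (c1 k * q ^ k) + (1 - \<alpha>) * (c2 k * q ^ k)) sums (\<alpha> * pgf c1 q + (1 - \<alpha>) * pgf c2 q)"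
        using c1(1,3) c2(1,3) that by (intro sums_add sums_mult pgf_sums) (auto simp: sums_iff)
      then show ?thesis
        by (simp add: algebra_simps)
    qed
    show "\<alpha> * pgf c1 1 + (1 - \<alpha>) * pgf c2 1 = 1"
      using c1(3) c2(3) by (simp add: pgf_def sums_iff)
    show "0 \<le> \<alpha> * c1 k + (1 - \<alpha>) * c2 k" for k
      using c1(1) c2(1) alpha by simp
    show "\<alpha> * f1 p + (1 - \<alpha>) * f2 p = 1 - (\<alpha> * pgf c1 (1 - p) + (1 - \<alpha>) * pgf c2 (1 - p))"
      if "p \<in> {0<..<1}" for p
      unfolding c1(4)[rule_format, OF that] c2(4)[rule_format, OF that] by (simp add: algebra_simps)
  qed (use c1 c2 in auto)
qed

lemma bigOmega_at0_iff:
  "bigOmega_at0 A B \<longleftrightarrow> (\<exists>C>0. eventually (\<lambda>p. C * B p \<le> A p) (at_right (0::real)))"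
proof
  assume "bigOmega_at0 A B"
  then obtain C d where "C > 0" "d > 0" "\<forall>p. 0 < p \<and> p < 1 \<and> p < d \<longrightarrow> C * B p \<le> A p"
    unfolding bigOmega_at0_def by blast
  then show "\<exists>C>0. eventually (\<lambda>p. C * B p \<le> A p) (at_right 0)"
    unfolding eventually_at_right_field by (intro exI[of _ C] conjI exI[of _ "min d 1"]) auto
next
  assume "\<exists>C>0. eventually (\<lambda>p. C * B p \<le> A p) (at_right (0::real))"
  then obtain C d where "C > 0" "d > 0" "\<forall>p>0. p < d \<longrightarrow> C * B p \<le> A p"
    unfolding eventually_at_right_field by auto
  then show "bigOmega_at0 A B"
    unfolding bigOmega_at0_def by (intro exI[of _ C] conjI exI[of _ d]) auto
qed

lemma eventually_at_right_0_if_unit_interval: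
  "\<forall>p\<in>{0<..<1}. P p \<Longrightarrow> eventually P (at_right (0::real))"
  unfolding eventually_at_right_field by (intro exI[of _ 1]) auto

lemma filterlim_div_at_top_comp:
  assumes "filterlim (\<lambda>p. f1 p / p) at_top (at_right 0)" "filterlim (\<lambda>q. f2 q / q) at_top (at_right 0)"
    and "filterlim f1 (at_right 0) (at_right (0::real))"
  shows "filterlim (\<lambda>p. f2 (f1 p) / p) at_top (at_right 0)"
proof -
  have lim: "filterlim (\<lambda>p. f2 (f1 p) / f1 p * (f1 p / p)) at_top (at_right 0)"
    using filterlim_compose[OF assms(2,3)] assms(1) by (rule filterlim_at_top_mult_at_top)
  have eq: "eventually (\<lambda>p. f2 (f1 p) / f1 p * (f1 p / p) = f2 (f1 p) / p) (at_right 0)"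
    using eventually_compose_filterlim[OF eventually_at_right_less assms(3)] by eventually_elim simp
  show ?thesis
    using filterlim_cong[OF refl refl eq] lim by simp
qed

lemma filterlim_div_at_top_mono_cmult:
  assumes "filterlim (\<lambda>p. f p / p) at_top (at_right 0)" "0 < \<beta>"
    and "eventually (\<lambda>p. \<beta> * f p \<le> g p) (at_right (0::real))"
  shows "filterlim (\<lambda>p. g p / p) at_top (at_right 0)"
proof (rule filterlim_at_top_mono)
  show "filterlim (\<lambda>p. \<beta> * (f p / p)) at_top (at_right 0)"
    by (rule filterlim_tendsto_pos_mult_at_top[OF tendsto_const assms(2,1)])
  show "eventually (\<lambda>p. \<beta> * (f p / p) \<le> g p / p) (at_right 0)"
    using assms(3) eventually_at_right_less by eventually_elim (simp add: divide_right_mono)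
qed

lemma bigOmega_at0_deriv_comp:
  fixes f1 f2 :: "real \<Rightarrow> real"
  assumes lim: "filterlim f1 (at_right 0) (at_right 0)"
    and diff1: "eventually (\<lambda>p. f1 differentiable (at p)) (at_right 0)"
    and diff2: "eventually (\<lambda>q. f2 differentiable (at q)) (at_right 0)"
    and nonneg2: "eventually (\<lambda>q. 0 \<le> f2 q) (at_right 0)"
    and omega1: "bigOmega_at0 (deriv f1) (\<lambda>p. f1 p / p)"
    and omega2: "bigOmega_at0 (deriv f2) (\<lambda>q. f2 q / q)"
  shows "bigOmega_at0 (deriv (\<lambda>p. f2 (f1 p))) (\<lambda>p. f2 (f1 p) / p)"
proof -
  obtain C1 where C1: "C1 > 0" and bound1: "eventually (\<lambda>p. C1 * (f1 p / p) \<le> deriv f1 p) (at_right 0)"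
    using omega1 unfolding bigOmega_at0_iff by blast
  obtain C2 where C2: "C2 > 0" and bound2: "eventually (\<lambda>q. C2 * (f2 q / q) \<le> deriv f2 q) (at_right 0)"
    using omega2 unfolding bigOmega_at0_iff by blast
  have "eventually (\<lambda>p. (C1 * C2) * (f2 (f1 p) / p) \<le> deriv (\<lambda>p. f2 (f1 p)) p) (at_right 0)"
    using eventually_at_right_less diff1 bound1
      eventually_at_right_less[THEN eventually_compose_filterlim[OF _ lim]] diff2[THEN eventually_compose_filterlim[OF _ lim]] nonneg2[THEN eventually_compose_filterlim[OF _ lim]]
      bound2[THEN eventually_compose_filterlim[OF _ lim]]
  proof eventually_elim
    case (elim p)
    have "((\<lambda>p. f2 (f1 p)) has_field_derivative deriv f2 (f1 p) * deriv f1 p) (at p)"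
      using elim by (intro DERIV_chain2) (simp_all add: DERIV_deriv_iff_real_differentiable)
    then have "deriv (\<lambda>p. f2 (f1 p)) p = deriv f2 (f1 p) * deriv f1 p"
      by (rule DERIV_imp_deriv)
    moreover have "C2 * (f2 (f1 p) / f1 p) * (C1 * (f1 p / p)) \<le> deriv f2 (f1 p) * deriv f1 p"
    proof (rule mult_mono)
      have "0 \<le> C2 * (f2 (f1 p) / f1 p)"
        using elim C2 by simp
      then show "0 \<le> deriv f2 (f1 p)"
        using elim by linarith
      show "0 \<le> C1 * (f1 p / p)"
        using elim C1 by simp
    qed (use elim in simp_all)
    moreover have "C2 * (f2 (f1 p) / f1 p) * (C1 * (f1 p / p)) = (C1 * C2) * (f2 (f1 p) / p)"
      using elim by (simp add: field_simps)
    ultimately show ?case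
      by linarith
  qed
  then show ?thesis
    unfolding bigOmega_at0_iff using C1 C2 by (intro exI[of _ "C1 * C2"]) simp
qed

lemma bigOmega_at0_deriv_compl_mult:
  fixes f1 f2 :: "real \<Rightarrow> real"
  assumes diff1: "eventually (\<lambda>p. f1 differentiable (at p)) (at_right 0)"
    and diff2: "eventually (\<lambda>p. f2 differentiable (at p)) (at_right 0)"
    and nonneg1: "eventually (\<lambda>p. 0 \<le> f1 p) (at_right 0)"
    and nonneg2: "eventually (\<lambda>p. 0 \<le> f2 p) (at_right 0)"
    and lim: "(f1 \<longlongrightarrow> 0) (at_right 0)" "(f2 \<longlongrightarrow> 0) (at_right 0)"
    and omega1: "bigOmega_at0 (deriv f1) (\<lambda>p. f1 p / p)"
    and omega2: "bigOmega_at0 (deriv f2) (\<lambda>p. f2 p / p)"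
  shows "bigOmega_at0 (deriv (\<lambda>p. 1 - (1 - f1 p) * (1 - f2 p))) (\<lambda>p. (1 - (1 - f1 p) * (1 - f2 p)) / p)"
proof -
  obtain C1 where C1: "C1 > 0" and bound1: "eventually (\<lambda>p. C1 * (f1 p / p) \<le> deriv f1 p) (at_right 0)"
    using omega1 unfolding bigOmega_at0_iff by blast
  obtain C2 where C2: "C2 > 0" and bound2: "eventually (\<lambda>p. C2 * (f2 p / p) \<le> deriv f2 p) (at_right 0)"
    using omega2 unfolding bigOmega_at0_iff by blast
  define C where "C = min C1 C2 / 2"
  have small: "eventually (\<lambda>p. f1 p < 1/2 \<and> f2 p < 1/2) (at_right 0)"
    using order_tendstoD(2)[OF lim(1), of "1/2"] order_tendstoD(2)[OF lim(2), of "1/2"]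
    by (simp add: eventually_conj_iff)
  have "eventually (\<lambda>p. C * ((1 - (1 - f1 p) * (1 - f2 p)) / p)
          \<le> deriv (\<lambda>p. 1 - (1 - f1 p) * (1 - f2 p)) p) (at_right 0)"
    using eventually_at_right_less diff1 diff2 nonneg1 nonneg2 small bound1 bound2
  proof eventually_elim
    case (elim p)
    have "(f1 has_field_derivative deriv f1 p) (at p)" "(f2 has_field_derivative deriv f2 p) (at p)"
      using elim by (simp_all add: DERIV_deriv_iff_real_differentiable)
    then have "((\<lambda>p. 1 - (1 - f1 p) * (1 - f2 p)) has_field_derivative
            0 - ((0 - deriv f1 p) * (1 - f2 p) + (0 - deriv f2 p) * (1 - f1 p))) (at p)"
      by (intro DERIV_diff DERIV_mult DERIV_const)
    then have deriv_eq: "deriv (\<lambda>p. 1 - (1 - f1 p) * (1 - f2 p)) p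
        = deriv f1 p * (1 - f2 p) + deriv f2 p * (1 - f1 p)"
      by (simp add: DERIV_imp_deriv algebra_simps)
    have half_bound: "C * (u / p) \<le> d * (1 - v)"
      if "Ci * (u / p) \<le> d" "C \<le> Ci / 2" "0 < Ci" "0 \<le> u" "v < 1/2" for u v d Ci
    proof -
      have "0 \<le> u / p" "0 \<le> Ci * (u / p)"
        using that elim by simp_all
      have "C * (u / p) \<le> Ci / 2 * (u / p)"
        by (rule mult_right_mono[OF that(2) \<open>0 \<le> u / p\<close>])
      also have "\<dots> = Ci * (u / p) * (1/2)"
        by simp
      also have "\<dots> \<le> d * (1 - v)"
        using that \<open>0 \<le> Ci * (u / p)\<close> by (intro mult_mono) simp_all
      finally show ?thesis .
    qed
    have "C * (f1 p / p) \<le> deriv f1 p * (1 - f2 p)" "C * (f2 p / p) \<le> deriv f2 p * (1 - f1 p)"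
      using half_bound elim C1 C2 unfolding C_def by auto
    moreover have "1 - (1 - f1 p) * (1 - f2 p) \<le> f1 p + f2 p"
      using elim by (simp add: algebra_simps)
    then have "C * ((1 - (1 - f1 p) * (1 - f2 p)) / p) \<le> C * (f1 p / p) + C * (f2 p / p)"
      using elim C1 C2 unfolding C_def by (simp add: divide_right_mono flip: distrib_left add_divide_distrib)
    ultimately show ?case
      unfolding deriv_eq by linarith
  qed
  then show ?thesis
    unfolding bigOmega_at0_iff using C1 C2 by (intro exI[of _ C]) (simp add: C_def)
qed

lemma bigOmega_at0_deriv_convex_comb:
  fixes f1 f2 :: "real \<Rightarrow> real"
  assumes diff1: "eventually (\<lambda>p. f1 differentiable (at p)) (at_right 0)"
    and diff2: "eventually (\<lambda>p. f2 differentiable (at p)) (at_right 0)"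
    and nonneg1: "eventually (\<lambda>p. 0 \<le> f1 p) (at_right 0)"
    and nonneg2: "eventually (\<lambda>p. 0 \<le> f2 p) (at_right 0)"
    and alpha: "0 \<le> \<alpha>" "\<alpha> \<le> 1"
    and omega1: "bigOmega_at0 (deriv f1) (\<lambda>p. f1 p / p)"
    and omega2: "bigOmega_at0 (deriv f2) (\<lambda>p. f2 p / p)"
  shows "bigOmega_at0 (deriv (\<lambda>p. \<alpha> * f1 p + (1 - \<alpha>) * f2 p)) (\<lambda>p. (\<alpha> * f1 p + (1 - \<alpha>) * f2 p) / p)"
proof -
  obtain C1 where C1: "C1 > 0" and bound1: "eventually (\<lambda>p. C1 * (f1 p / p) \<le> deriv f1 p) (at_right 0)"
    using omega1 unfolding bigOmega_at0_iff by blast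
  obtain C2 where C2: "C2 > 0" and bound2: "eventually (\<lambda>p. C2 * (f2 p / p) \<le> deriv f2 p) (at_right 0)"
    using omega2 unfolding bigOmega_at0_iff by blast
  define C where "C = min C1 C2"
  have "eventually (\<lambda>p. C * ((\<alpha> * f1 p + (1 - \<alpha>) * f2 p) / p)
          \<le> deriv (\<lambda>p. \<alpha> * f1 p + (1 - \<alpha>) * f2 p) p) (at_right 0)"
    using eventually_at_right_less diff1 diff2 nonneg1 nonneg2 bound1 bound2
  proof eventually_elim
    case (elim p)
    have "(f1 has_field_derivative deriv f1 p) (at p)" "(f2 has_field_derivative deriv f2 p) (at p)"
      using elim by (simp_all add: DERIV_deriv_iff_real_differentiable)
    then have "((\<lambda>p. \<alpha> * f1 p + (1 - \<alpha>) * f2 p) has_field_derivative \<alpha> * deriv f1 p + (1 - \<alpha>) * deriv f2 p) (at p)"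
      by (intro DERIV_add DERIV_cmult)
    then have deriv_eq: "deriv (\<lambda>p. \<alpha> * f1 p + (1 - \<alpha>) * f2 p) p = \<alpha> * deriv f1 p + (1 - \<alpha>) * deriv f2 p"
      by (rule DERIV_imp_deriv)
    have "0 \<le> f1 p / p" "0 \<le> f2 p / p"
      using elim by simp_all
    then have "C * (f1 p / p) \<le> deriv f1 p" "C * (f2 p / p) \<le> deriv f2 p"
      using elim unfolding C_def by (meson min.cobounded1 min.cobounded2 mult_right_mono order_trans)+
    then have "\<alpha> * (C * (f1 p / p)) + (1 - \<alpha>) * (C * (f2 p / p)) \<le> \<alpha> * deriv f1 p + (1 - \<alpha>) * deriv f2 p"
      using alpha by (intro add_mono mult_left_mono) simp_all
    moreover have "C * ((\<alpha> * f1 p + (1 - \<alpha>) * f2 p) / p) = \<alpha> * (C * (f1 p / p)) + (1 - \<alpha>) * (C * (f2 p / p))"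
      using elim by (simp add: field_simps)
    ultimately show ?case
      unfolding deriv_eq by simp
  qed
  then show ?thesis
    unfolding bigOmega_at0_iff using C1 C2 by (intro exI[of _ C]) (simp add: C_def)
qed

theorem proposition4:
  fixes f1 f2 :: "real \<Rightarrow> real" and c1 c2 :: "nat \<Rightarrow> real" and \<alpha> :: real
  assumes f1_range: "\<forall>p\<in>{0<..<1}. f1 p \<in> {0<..<1}"
    and f2_range: "\<forall>p\<in>{0<..<1}. f2 p \<in> {0<..<1}"
    and f1_form: "series_form f1 c1"
    and f2_form: "series_form f2 c2"
    and alpha: "0 < \<alpha>" "\<alpha> < 1"
  shows "\<forall>F \<in> {(\<lambda>p. f2 (f1 p)), (\<lambda>p. 1 - (1 - f1 p) * (1 - f2 p)), (\<lambda>p. \<alpha> * f1 p + (1 - \<alpha>) * f2 p)}.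
           (\<exists>c. series_form F c)
         \<and> ((filterlim (\<lambda>p. f1 p / p) at_top (at_right 0) \<and> filterlim (\<lambda>p. f2 p / p) at_top (at_right 0))
              \<longrightarrow> filterlim (\<lambda>p. F p / p) at_top (at_right 0))
         \<and> ((bigOmega_at0 (deriv f1) (\<lambda>p. f1 p / p) \<and> bigOmega_at0 (deriv f2) (\<lambda>p. f2 p / p))
              \<longrightarrow> bigOmega_at0 (deriv F) (\<lambda>p. F p / p))"
proof -
  have in_unit: "eventually (\<lambda>p. f1 p \<in> {0<..<1} \<and> f2 p \<in> {0<..<1}) (at_right 0)"
    using f1_range f2_range by (intro eventually_at_right_0_if_unit_interval) simp
  then have nonneg: "eventually (\<lambda>p. 0 \<le> f1 p) (at_right 0)" "eventually (\<lambda>p. 0 \<le> f2 p) (at_right 0)"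
    by (auto elim: eventually_mono)
  have diff: "eventually (\<lambda>p. f1 differentiable (at p)) (at_right 0)"
    "eventually (\<lambda>p. f2 differentiable (at p)) (at_right 0)"
    using series_form_differentiable[OF f1_form] series_form_differentiable[OF f2_form]
    by (auto intro: eventually_at_right_0_if_unit_interval)
  have lim1: "filterlim f1 (at_right 0) (at_right 0)"
    using in_unit series_form_tendsto_0[OF f1_form] unfolding filterlim_at
    by (auto elim: eventually_mono)
  have lower: "eventually (\<lambda>p. 1 * f1 p \<le> 1 - (1 - f1 p) * (1 - f2 p)) (at_right 0)"
    "eventually (\<lambda>p. \<alpha> * f1 p \<le> \<alpha> * f1 p + (1 - \<alpha>) * f2 p) (at_right 0)"
    using in_unit alpha by (auto elim!: eventually_mono simp: algebra_simps)
  show ?thesis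
    using series_form_comp[OF f1_form f2_form f1_range] series_form_compl_mult[OF f1_form f2_form]
      series_form_convex_comb[OF f1_form f2_form, of \<alpha>] alpha
      filterlim_div_at_top_comp[OF _ _ lim1] filterlim_div_at_top_mono_cmult[OF _ _ lower(1)]
      filterlim_div_at_top_mono_cmult[OF _ alpha(1) lower(2)]
      bigOmega_at0_deriv_comp[OF lim1 diff nonneg(2)]
      bigOmega_at0_deriv_compl_mult[OF diff nonneg series_form_tendsto_0[OF f1_form] series_form_tendsto_0[OF f2_form]]
      bigOmega_at0_deriv_convex_comb[OF diff nonneg, of \<alpha>]
    by auto
qed

end
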